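(* Let $G$ be an étale groupoid with base $T=G^{(0)}$, $T_0$ a totally disconnected $G$-space whose structure map $g\colon T_0\to T$ is proper with fibers of at most $N$ points, $T_n$ the $(n+1)$-fold fiber product of $T_0$ over $T$, and $g_n\colon T_n\to T$ the induced map. Let $F$ be a $G$-sheaf, $F^n=(g_n)_*(g_n^*F)$, and $F^{n,a}\subset F^n$ the alternating subsheaf. Then $F^{n,a}$ is c-soft.
   Context: All spaces are second countable locally compact Hausdorff. $T_n=\{(x_0,\dots,x_n)\in T_0^{n+1}:g(x_0)=\dots=g(x_n)\}$, $g_n(x_0,\dots,x_n)=g(x_0)$; $S_{n+1}$ acts on $T_n$ by permuting coordinates, hence on $F^n$ (using $\Gamma(U,F^n)=\Gamma(g_n^{-1}(U),g_n^*F)$). $T_n^f\subset T_n$ is the open set of points with pairwise distinct coordinates. For $U\subset T$ open, $\Gamma(U,F^{n,a})=\{x\in\Gamma(U,F^n): \operatorname{supp}x\subset T_n^f,\ s x=(-1)^{|s|}x\ \forall s\in S_{n+1}\}$. A sheaf is c-soft if every section over a compact subset extends to a global section. *)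

theory Defs
  imports "HOL-Analysis.Analysis" "HOL-Combinatorics.Permutations"
begin

definition sclch :: "'a topology \<Rightarrow> bool" where
  "sclch X \<longleftrightarrow> second_countable X \<and> locally_compact_space X \<and> Hausdorff_space X"

definition totally_disconnected_space :: "'a topology \<Rightarrow> bool" where
  "totally_disconnected_space X \<longleftrightarrow> (\<forall>C. connectedin X C \<longrightarrow> (\<exists>a. C \<subseteq> {a}))"

definition local_homeo :: "'a topology \<Rightarrow> 'b topology \<Rightarrow> ('a \<Rightarrow> 'b) \<Rightarrow> bool" where
  "local_homeo X Y f \<longleftrightarrow> continuous_map X Y f \<and>
     (\<forall>x\<in>topspace X. \<exists>W. openin X W \<and> x \<in> W \<and> openin Y (f ` W) \<and>
        homeomorphic_map (subtopology X W) (subtopology Y (f ` W)) f)"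

definition fibprod :: "'a topology \<Rightarrow> ('a \<Rightarrow> 'c) \<Rightarrow> 'b topology \<Rightarrow> ('b \<Rightarrow> 'c) \<Rightarrow> ('a \<times> 'b) topology" where
  "fibprod X f Y h = subtopology (prod_topology X Y)
      {(x, y). x \<in> topspace X \<and> y \<in> topspace Y \<and> f x = h y}"

definition groupoid ::
  "'g set \<Rightarrow> 't set \<Rightarrow> ('g \<Rightarrow> 't) \<Rightarrow> ('g \<Rightarrow> 't) \<Rightarrow> ('g \<Rightarrow> 'g \<Rightarrow> 'g) \<Rightarrow> ('g \<Rightarrow> 'g) \<Rightarrow> ('t \<Rightarrow> 'g) \<Rightarrow> bool" where
  "groupoid Gs Ts s r m i u \<longleftrightarrow>
     (\<forall>a\<in>Gs. s a \<in> Ts \<and> r a \<in> Ts \<and> i a \<in> Gs) \<and>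
     (\<forall>x\<in>Ts. u x \<in> Gs \<and> s (u x) = x \<and> r (u x) = x) \<and>
     (\<forall>a\<in>Gs. \<forall>b\<in>Gs. s a = r b \<longrightarrow> m a b \<in> Gs \<and> s (m a b) = s b \<and> r (m a b) = r a) \<and>
     (\<forall>a\<in>Gs. \<forall>b\<in>Gs. \<forall>c\<in>Gs. s a = r b \<longrightarrow> s b = r c \<longrightarrow> m (m a b) c = m a (m b c)) \<and>
     (\<forall>a\<in>Gs. m (u (r a)) a = a \<and> m a (u (s a)) = a) \<and>
     (\<forall>a\<in>Gs. s (i a) = r a \<and> r (i a) = s a \<and> m a (i a) = u (r a) \<and> m (i a) a = u (s a))"

text \<open>Etale groupoid G with unit space T (identified with G^(0) via u):
  a topological groupoid whose range map is a local homeomorphism.\<close>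
definition etale_groupoid ::
  "'g topology \<Rightarrow> 't topology \<Rightarrow> ('g \<Rightarrow> 't) \<Rightarrow> ('g \<Rightarrow> 't) \<Rightarrow> ('g \<Rightarrow> 'g \<Rightarrow> 'g) \<Rightarrow> ('g \<Rightarrow> 'g) \<Rightarrow> ('t \<Rightarrow> 'g) \<Rightarrow> bool" where
  "etale_groupoid G T s r m i u \<longleftrightarrow>
     groupoid (topspace G) (topspace T) s r m i u \<and>
     continuous_map G T s \<and> continuous_map G T r \<and> continuous_map G G i \<and>
     continuous_map T G u \<and>
     continuous_map (fibprod G s G r) G (\<lambda>(a, b). m a b) \<and>
     local_homeo G T r"

definition G_space ::
  "'g topology \<Rightarrow> 't topology \<Rightarrow> ('g \<Rightarrow> 't) \<Rightarrow> ('g \<Rightarrow> 't) \<Rightarrow> ('g \<Rightarrow> 'g \<Rightarrow> 'g) \<Rightarrow> ('t \<Rightarrow> 'g)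
    \<Rightarrow> 'x topology \<Rightarrow> ('x \<Rightarrow> 't) \<Rightarrow> ('g \<Rightarrow> 'x \<Rightarrow> 'x) \<Rightarrow> bool" where
  "G_space G T s r m u X g act \<longleftrightarrow>
     continuous_map X T g \<and>
     continuous_map (fibprod G s X g) X (\<lambda>(a, x). act a x) \<and>
     (\<forall>a\<in>topspace G. \<forall>x\<in>topspace X. s a = g x \<longrightarrow> g (act a x) = r a) \<and>
     (\<forall>x\<in>topspace X. act (u (g x)) x = x) \<and>
     (\<forall>a\<in>topspace G. \<forall>b\<in>topspace G. \<forall>x\<in>topspace X.
        s a = r b \<longrightarrow> s b = g x \<longrightarrow> act (m a b) x = act a (act b x))"

text \<open>A sheaf of abelian groups on T, given by its etale space E with projection p,
  fibrewise addition add, zero section zero and negation neg.\<close>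
definition ab_sheaf_space ::
  "'t topology \<Rightarrow> 'e topology \<Rightarrow> ('e \<Rightarrow> 't) \<Rightarrow> ('e \<Rightarrow> 'e \<Rightarrow> 'e) \<Rightarrow> ('t \<Rightarrow> 'e) \<Rightarrow> ('e \<Rightarrow> 'e) \<Rightarrow> bool" where
  "ab_sheaf_space T E p add zero neg \<longleftrightarrow>
     local_homeo E T p \<and>
     continuous_map T E zero \<and> (\<forall>t\<in>topspace T. p (zero t) = t) \<and>
     continuous_map E E neg \<and>
     continuous_map (fibprod E p E p) E (\<lambda>(e, e'). add e e') \<and>
     (\<forall>e\<in>topspace E. p (neg e) = p e \<and> add e (zero (p e)) = e \<and> add e (neg e) = zero (p e)) \<and>
     (\<forall>e\<in>topspace E. \<forall>e'\<in>topspace E. p e = p e' \<longrightarrow> p (add e e') = p e \<and> add e e' = add e' e) \<and>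
     (\<forall>e\<in>topspace E. \<forall>e'\<in>topspace E. \<forall>e''\<in>topspace E. p e = p e' \<longrightarrow> p e' = p e'' \<longrightarrow>
        add (add e e') e'' = add e (add e' e''))"

definition G_sheaf ::
  "'g topology \<Rightarrow> 't topology \<Rightarrow> ('g \<Rightarrow> 't) \<Rightarrow> ('g \<Rightarrow> 't) \<Rightarrow> ('g \<Rightarrow> 'g \<Rightarrow> 'g) \<Rightarrow> ('t \<Rightarrow> 'g)
    \<Rightarrow> 'e topology \<Rightarrow> ('e \<Rightarrow> 't) \<Rightarrow> ('e \<Rightarrow> 'e \<Rightarrow> 'e) \<Rightarrow> ('t \<Rightarrow> 'e) \<Rightarrow> ('e \<Rightarrow> 'e)
    \<Rightarrow> ('g \<Rightarrow> 'e \<Rightarrow> 'e) \<Rightarrow> bool" where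
  "G_sheaf G T s r m u E p add zero neg act \<longleftrightarrow>
     ab_sheaf_space T E p add zero neg \<and> G_space G T s r m u E p act \<and>
     (\<forall>a\<in>topspace G. \<forall>e\<in>topspace E. \<forall>e'\<in>topspace E. s a = p e \<longrightarrow> p e = p e' \<longrightarrow>
        act a (add e e') = add (act a e) (act a e'))"

text \<open>T_n: (n+1)-tuples (x_0,...,x_n), encoded as functions on {0..n}, with g(x_0)=...=g(x_n).\<close>
definition Tn_set :: "'x topology \<Rightarrow> ('x \<Rightarrow> 't) \<Rightarrow> nat \<Rightarrow> (nat \<Rightarrow> 'x) set" where
  "Tn_set X0 g n = {x \<in> PiE {0..n} (\<lambda>_. topspace X0). \<forall>i\<in>{0..n}. g (x i) = g (x 0)}"

definition Tn :: "'x topology \<Rightarrow> ('x \<Rightarrow> 't) \<Rightarrow> nat \<Rightarrow> (nat \<Rightarrow> 'x) topology" where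
  "Tn X0 g n = subtopology (product_topology (\<lambda>_. X0) {0..n}) (Tn_set X0 g n)"

definition gn :: "('x \<Rightarrow> 't) \<Rightarrow> (nat \<Rightarrow> 'x) \<Rightarrow> 't" where
  "gn g x = g (x 0)"

definition Tnf :: "'x topology \<Rightarrow> ('x \<Rightarrow> 't) \<Rightarrow> nat \<Rightarrow> (nat \<Rightarrow> 'x) set" where
  "Tnf X0 g n = {x \<in> topspace (Tn X0 g n). inj_on x {0..n}}"

definition gn_preim :: "'x topology \<Rightarrow> ('x \<Rightarrow> 't) \<Rightarrow> nat \<Rightarrow> 't set \<Rightarrow> (nat \<Rightarrow> 'x) set" where
  "gn_preim X0 g n U = {x \<in> topspace (Tn X0 g n). gn g x \<in> U}"

text \<open>Gamma(U, F^n) = Gamma(g_n^{-1}(U), g_n^* F): continuous sections of the etale space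
  of the pullback sheaf g_n^* F (i.e. continuous maps s into E with p (s x) = g_n x).\<close>
definition sec_Fn ::
  "'x topology \<Rightarrow> ('x \<Rightarrow> 't) \<Rightarrow> nat \<Rightarrow> 'e topology \<Rightarrow> ('e \<Rightarrow> 't) \<Rightarrow> 't set \<Rightarrow> ((nat \<Rightarrow> 'x) \<Rightarrow> 'e) set" where
  "sec_Fn X0 g n E p U =
     {s. continuous_map (subtopology (Tn X0 g n) (gn_preim X0 g n U)) E s \<and>
         (\<forall>x\<in>gn_preim X0 g n U. p (s x) = gn g x)}"

text \<open>Gamma(U, F^{n,a}): sections with support in T_n^f that are alternating under S_{n+1}.\<close>
definition sec_Fna ::
  "'x topology \<Rightarrow> ('x \<Rightarrow> 't) \<Rightarrow> nat \<Rightarrow> 'e topology \<Rightarrow> ('e \<Rightarrow> 't) \<Rightarrow> ('t \<Rightarrow> 'e) \<Rightarrow> ('e \<Rightarrow> 'e)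
     \<Rightarrow> 't set \<Rightarrow> ((nat \<Rightarrow> 'x) \<Rightarrow> 'e) set" where
  "sec_Fna X0 g n E p zero neg U =
     {s \<in> sec_Fn X0 g n E p U.
        (subtopology (Tn X0 g n) (gn_preim X0 g n U)) closure_of
            {x \<in> gn_preim X0 g n U. s x \<noteq> zero (gn g x)} \<subseteq> Tnf X0 g n \<and>
        (\<forall>\<sigma>. \<sigma> permutes {0..n} \<longrightarrow>
           (\<forall>x\<in>gn_preim X0 g n U. s (x \<circ> \<sigma>) = (if evenperm \<sigma> then s x else neg (s x))))}"

text \<open>A sheaf on T, given by its sections Sec U over open sets U (functions defined on Dom U,
  restriction being restriction of functions), is c-soft if every section over a compact
  K extends to a global section.  A section over K is a germ along K, i.e. a section over
  some open U containing K, two such being identified if they agree on an open W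
  with K \<subseteq> W.\<close>
definition c_soft :: "'t topology \<Rightarrow> ('t set \<Rightarrow> ('d \<Rightarrow> 'e) set) \<Rightarrow> ('t set \<Rightarrow> 'd set) \<Rightarrow> bool" where
  "c_soft T Sec Dom \<longleftrightarrow>
     (\<forall>K U s. compactin T K \<and> openin T U \<and> K \<subseteq> U \<and> s \<in> Sec U \<longrightarrow>
        (\<exists>t\<in>Sec (topspace T). \<exists>W. openin T W \<and> K \<subseteq> W \<and> W \<subseteq> U \<and>
            (\<forall>x\<in>Dom W. t x = s x)))"

end

theory Submission
  imports Defs
begin

text \<open>Let s be a section of F^{n,a} over an open U containing the compact set K, and choose a
  compact neighbourhood L of K inside U. Since g is proper, the part of the support of s lying
  over L is a compact subset of the open set T_n^f \<inter> g_n^{-1}(U). The space T_n is locally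
  compact, Hausdorff and totally disconnected, so this compact set has a clopen neighbourhood
  inside T_n^f \<inter> g_n^{-1}(U); the union of its finitely many images under S_{n+1} is still
  clopen and is moreover invariant. Extending s by zero off this invariant clopen set yields a
  global alternating section supported in T_n^f that agrees with s over the interior of L.\<close>

section \<open>General topology\<close>

lemma totally_disconnected_space_subtopology:
  "totally_disconnected_space X \<Longrightarrow> totally_disconnected_space (subtopology X S)"
  unfolding totally_disconnected_space_def by (simp add: connectedin_subtopology)

lemma totally_disconnected_space_singleton_component:
  assumes "totally_disconnected_space X" and x: "x \<in> topspace X"
  shows "{x} \<in> connected_components_of X"
proof -
  obtain a where "connected_component_of_set X x \<subseteq> {a}"
    using assms(1) connectedin_connected_component_of unfolding totally_disconnected_space_def by meson
  moreover have "x \<in> connected_component_of_set X x"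
    using x connected_component_of_refl by fastforce
  ultimately have "connected_component_of_set X x = {x}"
    by blast
  then show ?thesis
    using x unfolding connected_components_of_def by (metis imageI)
qed

lemma clopen_between_compact_and_open:
  assumes "locally_compact_space X" and "Hausdorff_space X" and "totally_disconnected_space X"
    and C: "compactin X C" and W: "openin X W" and "C \<subseteq> W"
  obtains V where "openin X V" "closedin X V" "C \<subseteq> V" "V \<subseteq> W"
proof -
  have "separated_between X {x} (topspace X - W)" if "x \<in> C" for x
  proof (rule separated_between_compact_connected_component)
    have "x \<in> topspace X"
      using C that compactin_subset_topspace by blast
    then show "{x} \<in> connected_components_of X" and "compactin X {x}"
      using assms(3) by (simp_all add: totally_disconnected_space_singleton_component)
    show "closedin X (topspace X - W)" and "disjnt {x} (topspace X - W)"
      using W that \<open>C \<subseteq> W\<close> by auto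
  qed (fact assms)+
  then have "separated_between X C (topspace X - W)"
    using separated_between_pointwise_left[OF C] by simp
  then obtain A B where A: "openin X A" "C \<subseteq> A" and B: "openin X B" "topspace X - W \<subseteq> B"
      and AB: "A \<union> B = topspace X" "disjnt A B"
    unfolding separated_between_def by blast
  then have A_eq: "A = topspace X - B"
    by (auto simp: disjnt_def)
  have "closedin X A"
    unfolding A_eq using B(1) by (rule closedin_diff[OF closedin_topspace])
  moreover have "A \<subseteq> W"
    unfolding A_eq using B(2) by blast
  ultimately show ?thesis
    using that A(1,2) by blast
qed

lemma compact_neighbourhood_within_open:
  assumes "Hausdorff_space X" and "locally_compact_space X"
    and K: "compactin X K" and U: "openin X U" and "K \<subseteq> U"
  obtains V L where "openin X V" "compactin X L" "K \<subseteq> V" "V \<subseteq> L" "L \<subseteq> U"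
proof -
  have "Hausdorff_space (subtopology X U)"
    using assms(1) by (rule Hausdorff_space_subtopology)
  moreover have "locally_compact_space (subtopology X U)"
    using assms(1,2) U by (intro locally_compact_space_open_subset) auto
  ultimately have "\<forall>K. compactin (subtopology X U) K \<longrightarrow> (\<exists>V L. openin (subtopology X U) V \<and>
      compactin (subtopology X U) L \<and> closedin (subtopology X U) L \<and> K \<subseteq> V \<and> V \<subseteq> L)"
    using locally_compact_space_compact_closed_compact by blast
  moreover have "compactin (subtopology X U) K"
    using K \<open>K \<subseteq> U\<close> by (rule compact_imp_compactin_subtopology)
  ultimately obtain V L where V: "openin (subtopology X U) V" and L: "compactin (subtopology X U) L"
      and "K \<subseteq> V" "V \<subseteq> L"
    by blast
  moreover have "openin X V" and "compactin X L" "L \<subseteq> U"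
    using V L by (simp_all add: openin_open_subtopology[OF U] compactin_subtopology)
  ultimately show ?thesis
    using that[of V L] by simp
qed

lemma totally_disconnected_space_product_topology:
  assumes "\<And>i. i \<in> I \<Longrightarrow> totally_disconnected_space (X i)"
  shows "totally_disconnected_space (product_topology X I)"
  unfolding totally_disconnected_space_def
proof (intro allI impI)
  fix C assume C: "connectedin (product_topology X I) C"
  have "x = y" if "x \<in> C" "y \<in> C" for x y
  proof
    fix i
    show "x i = y i"
    proof (cases "i \<in> I")
      case True
      then have "connectedin (X i) ((\<lambda>x. x i) ` C)"
        using connectedin_continuous_map_image[OF continuous_map_product_projection C] by blast
      then show ?thesis
        using assms[OF True] that unfolding totally_disconnected_space_def by blast
    next
      case False
      have "C \<subseteq> extensional I"
        using connectedin_subset_topspace[OF C] by (auto simp: PiE_def)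
      then show ?thesis
        using False that by (metis extensional_arb subsetD)
    qed
  qed
  then show "\<exists>a. C \<subseteq> {a}"
    by blast
qed

lemma continuous_map_if_clopen:
  assumes "openin X V" and "closedin X V"
    and f: "continuous_map (subtopology X V) Y f" and h: "continuous_map X Y h"
  shows "continuous_map X Y (\<lambda>x. if x \<in> V then f x else h x)"
proof (rule continuous_map_cases)
  have "X closure_of {x. x \<in> V} = V"
    unfolding Collect_mem_eq using assms(2) by (rule closure_of_closedin)
  then show "continuous_map (subtopology X (X closure_of {x. x \<in> V})) Y f"
    using f by (simp only:)
  show "continuous_map (subtopology X (X closure_of {x. x \<notin> V})) Y h"
    using h by (rule continuous_map_from_subtopology)
  have "X frontier_of {x. x \<in> V} = {}"
    unfolding Collect_mem_eq using clopenin_eq_frontier_of[of X V] assms(1,2) by simp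
  then show "f x = h x" if "x \<in> X frontier_of {x. x \<in> V}" for x
    using that by (simp only: empty_iff)
qed

section \<open>The fibre powers T_n\<close>

lemma topspace_Tn: "topspace (Tn X0 g n) = Tn_set X0 g n"
  unfolding Tn_def Tn_set_def topspace_subtopology topspace_product_topology by blast

text \<open>Oriented towards gn g x because the defining equations g (x i) = g (x 0) of Tn_set
  loop as rewrite rules (at i = 0).\<close>

lemma Tn_setD:
  assumes "x \<in> Tn_set X0 g n" and "k \<le> n"
  shows "x k \<in> topspace X0" and "g (x k) = gn g x"
proof -
  have x: "x \<in> PiE {0..n} (\<lambda>_. topspace X0)" "\<forall>i\<in>{0..n}. g (x i) = g (x 0)"
    using assms(1) unfolding Tn_set_def by blast+
  have "k \<in> {0..n}"
    using assms(2) by simp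
  then show "x k \<in> topspace X0" and "g (x k) = gn g x"
    using x unfolding gn_def by (blast intro: PiE_mem)+
qed

lemma continuous_map_Tn_coordinate: "k \<le> n \<Longrightarrow> continuous_map (Tn X0 g n) X0 (\<lambda>x. x k)"
  using continuous_map_product_projection[of k "{0..n}" "\<lambda>_. X0"]
  by (simp add: Tn_def continuous_map_from_subtopology)

lemma continuous_map_gn: "continuous_map X0 T g \<Longrightarrow> continuous_map (Tn X0 g n) T (gn g)"
  unfolding gn_def using continuous_map_compose[OF continuous_map_Tn_coordinate[of 0 n X0 g]]
  by (simp add: o_def)

lemma Hausdorff_space_Tn: "Hausdorff_space X0 \<Longrightarrow> Hausdorff_space (Tn X0 g n)"
  unfolding Tn_def by (simp add: Hausdorff_space_subtopology Hausdorff_space_product_topology)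

lemma totally_disconnected_space_Tn:
  "totally_disconnected_space X0 \<Longrightarrow> totally_disconnected_space (Tn X0 g n)"
  unfolding Tn_def
  by (intro totally_disconnected_space_subtopology totally_disconnected_space_product_topology)

lemma closedin_Tn_set:
  fixes X0 :: "'x topology"
  assumes "Hausdorff_space T" and g: "continuous_map X0 T g"
  shows "closedin (product_topology (\<lambda>_. X0) {0..n}) (Tn_set X0 g n)"
proof -
  let ?P = "product_topology (\<lambda>_. X0) {0..n}"
  have "continuous_map ?P T (\<lambda>x. g (x k))" if "k \<in> {0..n}" for k
    using continuous_map_compose[OF continuous_map_product_projection[OF that] g]
    by (simp add: o_def)
  then have "closedin ?P {x \<in> topspace ?P. g (x k) = g (x 0)}" if "k \<in> {0..n}" for k
    using that by (intro closedin_continuous_maps_eq[OF assms(1)]) auto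
  then have "closedin ?P (\<Inter>k\<in>{0..n}. {x \<in> topspace ?P. g (x k) = g (x 0)})"
    by (intro closedin_INT) auto
  moreover have "Tn_set X0 g n = (\<Inter>k\<in>{0..n}. {x \<in> topspace ?P. g (x k) = g (x 0)})"
  proof -
    have Collect_ball: "{x \<in> A. \<forall>k\<in>I. Q k x} = (\<Inter>k\<in>I. {x \<in> A. Q k x})" if "I \<noteq> {}"
      for A I and Q :: "nat \<Rightarrow> (nat \<Rightarrow> 'x) \<Rightarrow> bool"
      using that by blast
    show ?thesis
      unfolding Tn_set_def topspace_product_topology by (rule Collect_ball) simp
  qed
  ultimately show ?thesis
    by simp
qed

lemma locally_compact_space_Tn:
  assumes "locally_compact_space X0" and "Hausdorff_space T" and "continuous_map X0 T g"
  shows "locally_compact_space (Tn X0 g n)"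
  unfolding Tn_def
  using assms by (intro locally_compact_space_closed_subset closedin_Tn_set)
    (simp_all add: locally_compact_space_product_topology)

lemma compactin_gn_preim:
  assumes "Hausdorff_space T" and g: "continuous_map X0 T g" and "proper_map X0 T g"
    and "compactin T L"
  shows "compactin (Tn X0 g n) (gn_preim X0 g n L)"
proof -
  let ?P = "product_topology (\<lambda>_. X0) {0..n}"
  let ?F = "{x \<in> topspace X0. g x \<in> L}"
  have "compactin X0 ?F"
    using assms(3,4) proper_map_alt by blast
  then have "compactin ?P (Tn_set X0 g n \<inter> PiE {0..n} (\<lambda>_. ?F))"
    by (intro closed_Int_compactin closedin_Tn_set[OF assms(1) g]) (simp add: compactin_PiE)
  moreover have "Tn_set X0 g n \<inter> PiE {0..n} (\<lambda>_. ?F) = gn_preim X0 g n L"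
  proof -
    have "x \<in> PiE {0..n} (\<lambda>_. ?F) \<longleftrightarrow> gn g x \<in> L" if x: "x \<in> Tn_set X0 g n" for x
    proof
      assume "x \<in> PiE {0..n} (\<lambda>_. ?F)"
      then show "gn g x \<in> L"
        by (simp add: PiE_iff gn_def)
    next
      assume "gn g x \<in> L"
      moreover have "x \<in> extensional {0..n}"
        using x unfolding Tn_set_def PiE_def by blast
      ultimately show "x \<in> PiE {0..n} (\<lambda>_. ?F)"
        using Tn_setD[OF x] by (simp add: PiE_iff)
    qed
    then show ?thesis
      unfolding gn_preim_def topspace_Tn by blast
  qed
  moreover have "gn_preim X0 g n L \<subseteq> Tn_set X0 g n"
    unfolding gn_preim_def topspace_Tn by blast
  ultimately show ?thesis
    unfolding Tn_def by (simp add: compactin_subtopology)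
qed

lemma openin_Tnf:
  assumes "Hausdorff_space X0"
  shows "openin (Tn X0 g n) (Tnf X0 g n)"
proof -
  let ?X = "Tn X0 g n"
  let ?D = "\<Union>a\<in>{0..n}. \<Union>b\<in>{0..n} - {a}. {x \<in> topspace ?X. x a = x b}"
  have "closedin ?X {x \<in> topspace ?X. x a = x b}" if "a \<le> n" "b \<le> n" for a b
    using that by (intro closedin_continuous_maps_eq[OF assms] continuous_map_Tn_coordinate)
  then have "closedin ?X (\<Union>b\<in>{0..n} - {a}. {x \<in> topspace ?X. x a = x b})" if "a \<le> n" for a
    using that by (intro closedin_Union) auto
  then have "closedin ?X ?D"
    by (intro closedin_Union) auto
  moreover have "Tnf X0 g n = topspace ?X - ?D"
    unfolding Tnf_def inj_on_def by blast
  ultimately show ?thesis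
    by (simp add: openin_diff)
qed

lemma Tn_compose_permutes:
  assumes \<sigma>: "\<sigma> permutes {0..n}" and x: "x \<in> topspace (Tn X0 g n)"
  shows "x \<circ> \<sigma> \<in> topspace (Tn X0 g n)" and "gn g (x \<circ> \<sigma>) = gn g x"
proof -
  have \<sigma>_le: "\<sigma> k \<le> n" if "k \<le> n" for k
    using permutes_in_image[OF \<sigma>, of k] that by simp
  have xT: "x \<in> Tn_set X0 g n"
    using x by (simp add: topspace_Tn)
  then have ext: "x \<in> extensional {0..n}"
    unfolding Tn_set_def PiE_def by blast
  show "gn g (x \<circ> \<sigma>) = gn g x"
    using Tn_setD(2)[OF xT \<sigma>_le[of 0]] by (simp add: gn_def)
  have "x \<circ> \<sigma> \<in> PiE {0..n} (\<lambda>_. topspace X0)"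
  proof (rule PiE_I)
    show "(x \<circ> \<sigma>) k \<in> topspace X0" if "k \<in> {0..n}" for k
      using Tn_setD(1)[OF xT \<sigma>_le] that by simp
    show "(x \<circ> \<sigma>) k = undefined" if "k \<notin> {0..n}" for k
      using that permutes_not_in[OF \<sigma> that] extensional_arb[OF ext that] by simp
  qed
  moreover have "\<forall>k\<in>{0..n}. g ((x \<circ> \<sigma>) k) = g ((x \<circ> \<sigma>) 0)"
    using Tn_setD(2)[OF xT] \<sigma>_le by simp
  ultimately show "x \<circ> \<sigma> \<in> topspace (Tn X0 g n)"
    unfolding topspace_Tn Tn_set_def mem_Collect_eq by (rule conjI)
qed

lemma Tnf_compose_permutes:
  assumes "\<sigma> permutes {0..n}" and "x \<in> topspace (Tn X0 g n)"
  shows "x \<circ> \<sigma> \<in> Tnf X0 g n \<longleftrightarrow> x \<in> Tnf X0 g n"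
proof -
  have "inj_on (x \<circ> \<sigma>) {0..n} \<longleftrightarrow> inj_on x {0..n}"
    by (metis comp_inj_on_iff permutes_image permutes_inj_on assms(1))
  then show ?thesis
    using Tn_compose_permutes[OF assms] assms(2) unfolding Tnf_def by blast
qed

lemma continuous_map_Tn_compose_permutes:
  assumes \<sigma>: "\<sigma> permutes {0..n}"
  shows "continuous_map (Tn X0 g n) (Tn X0 g n) (\<lambda>x. x \<circ> \<sigma>)"
proof -
  have "continuous_map (Tn X0 g n) X0 (\<lambda>x. (x \<circ> \<sigma>) k)" if "k \<in> {0..n}" for k
    using continuous_map_Tn_coordinate[of "\<sigma> k" n X0 g] permutes_in_image[OF \<sigma>, of k] that
    by simp
  moreover have "(\<lambda>x. x \<circ> \<sigma>) \<in> topspace (Tn X0 g n) \<rightarrow> Tn_set X0 g n"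
    using Tn_compose_permutes(1)[OF \<sigma>] by (auto simp: topspace_Tn)
  moreover from this have "(\<lambda>x. x \<circ> \<sigma>) ` topspace (Tn X0 g n) \<subseteq> extensional {0..n}"
    unfolding Tn_set_def PiE_def by blast
  ultimately have "continuous_map (Tn X0 g n)
      (subtopology (product_topology (\<lambda>_. X0) {0..n}) (Tn_set X0 g n)) (\<lambda>x. x \<circ> \<sigma>)"
    by (simp add: continuous_map_in_subtopology continuous_map_componentwise)
  then show ?thesis
    by (simp add: Tn_def)
qed

section \<open>Alternating sections\<close>

definition permutation_invariant :: "nat \<Rightarrow> (nat \<Rightarrow> 'x) set \<Rightarrow> bool" where
  "permutation_invariant n V \<longleftrightarrow> (\<forall>\<sigma> x. \<sigma> permutes {0..n} \<longrightarrow> x \<in> V \<longrightarrow> x \<circ> \<sigma> \<in> V)"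

lemma permutation_invariant_iff:
  assumes V: "permutation_invariant n V" and \<sigma>: "\<sigma> permutes {0..n}"
  shows "x \<circ> \<sigma> \<in> V \<longleftrightarrow> x \<in> V"
proof
  assume "x \<circ> \<sigma> \<in> V"
  then have "(x \<circ> \<sigma>) \<circ> inv \<sigma> \<in> V"
    using V permutes_inv[OF \<sigma>] unfolding permutation_invariant_def by blast
  then show "x \<in> V"
    by (simp add: fun_eq_iff permutes_inverses[OF \<sigma>] comp_def)
next
  assume "x \<in> V"
  then show "x \<circ> \<sigma> \<in> V"
    using V \<sigma> unfolding permutation_invariant_def by blast
qed

lemma permutation_invariant_clopen_superset:
  assumes V: "openin (Tn X0 g n) V" "closedin (Tn X0 g n) V"
    and V_sub: "V \<subseteq> Tnf X0 g n \<inter> gn_preim X0 g n U"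
  obtains V' where "openin (Tn X0 g n) V'" "closedin (Tn X0 g n) V'" "permutation_invariant n V'"
    "V \<subseteq> V'" "V' \<subseteq> Tnf X0 g n \<inter> gn_preim X0 g n U"
proof -
  let ?X = "Tn X0 g n"
  define V' where "V' = (\<Union>\<sigma>\<in>{\<sigma>. \<sigma> permutes {0..n}}. {x \<in> topspace ?X. x \<circ> \<sigma> \<in> V})"
  have "openin ?X {x \<in> topspace ?X. x \<circ> \<sigma> \<in> V}"
    and "closedin ?X {x \<in> topspace ?X. x \<circ> \<sigma> \<in> V}" if "\<sigma> permutes {0..n}" for \<sigma>
    using openin_continuous_map_preimage[OF continuous_map_Tn_compose_permutes[OF that] V(1)]
      closedin_continuous_map_preimage[OF continuous_map_Tn_compose_permutes[OF that] V(2)]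
    by auto
  then have "openin ?X V'" and "closedin ?X V'"
    unfolding V'_def by (auto intro!: openin_Union closedin_Union simp: finite_permutations)
  moreover have "V \<subseteq> V'"
    unfolding V'_def using openin_subset[OF V(1)] permutes_id by fastforce
  moreover have "V' \<subseteq> Tnf X0 g n \<inter> gn_preim X0 g n U"
  proof
    fix x assume "x \<in> V'"
    then obtain \<sigma> where \<sigma>: "\<sigma> permutes {0..n}" and x: "x \<in> topspace ?X" and "x \<circ> \<sigma> \<in> V"
      unfolding V'_def by blast
    then have "x \<circ> \<sigma> \<in> Tnf X0 g n" and "gn g (x \<circ> \<sigma>) \<in> U"
      using V_sub unfolding gn_preim_def by auto
    then show "x \<in> Tnf X0 g n \<inter> gn_preim X0 g n U"
      using Tnf_compose_permutes[OF \<sigma> x] Tn_compose_permutes(2)[OF \<sigma> x] x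
      unfolding gn_preim_def by simp
  qed
  moreover have "permutation_invariant n V'"
    unfolding permutation_invariant_def
  proof (intro allI impI)
    fix \<tau> x assume \<tau>: "\<tau> permutes {0..n}" and "x \<in> V'"
    then obtain \<sigma> where \<sigma>: "\<sigma> permutes {0..n}" and x: "x \<in> topspace ?X" and "x \<circ> \<sigma> \<in> V"
      unfolding V'_def by blast
    moreover have "(x \<circ> \<tau>) \<circ> (inv \<tau> \<circ> \<sigma>) = x \<circ> \<sigma>"
      by (simp add: fun_eq_iff permutes_inverses[OF \<tau>])
    ultimately show "x \<circ> \<tau> \<in> V'"
      unfolding V'_def using Tn_compose_permutes(1)[OF \<tau> x] permutes_compose[OF \<sigma> permutes_inv[OF \<tau>]]
      by auto
  qed
  ultimately show ?thesis
    using that by blast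
qed

lemma ab_sheaf_space_neg_zero:
  assumes "ab_sheaf_space T E p add zero neg" and "t \<in> topspace T"
  shows "neg (zero t) = zero t"
proof -
  let ?e = "zero t"
  have e: "?e \<in> topspace E" "p ?e = t"
    using assms continuous_map_image_subset_topspace unfolding ab_sheaf_space_def by fastforce+
  then have ne: "neg ?e \<in> topspace E" "p (neg ?e) = t"
    using assms(1) continuous_map_image_subset_topspace unfolding ab_sheaf_space_def by fastforce+
  have "add ?e (neg ?e) = ?e"
    using assms(1) e unfolding ab_sheaf_space_def by metis
  moreover have "add (neg ?e) ?e = neg ?e"
    using assms(1) e ne unfolding ab_sheaf_space_def by metis
  moreover have "add ?e (neg ?e) = add (neg ?e) ?e"
    using assms(1) e ne unfolding ab_sheaf_space_def by metis
  ultimately show ?thesis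
    by simp
qed

lemma gn_preim_topspace:
  "continuous_map X0 T g \<Longrightarrow> gn_preim X0 g n (topspace T) = topspace (Tn X0 g n)"
  unfolding gn_preim_def using continuous_map_image_subset_topspace[OF continuous_map_gn] by blast

lemma sec_Fna_extend_by_zero:
  assumes sheaf: "ab_sheaf_space T E p add zero neg" and g: "continuous_map X0 T g"
    and V: "openin (Tn X0 g n) V" "closedin (Tn X0 g n) V" "permutation_invariant n V"
      "V \<subseteq> Tnf X0 g n \<inter> gn_preim X0 g n U"
    and s: "s \<in> sec_Fna X0 g n E p zero neg U"
  shows "(\<lambda>x. if x \<in> V then s x else zero (gn g x)) \<in> sec_Fna X0 g n E p zero neg (topspace T)"
proof -
  let ?X = "Tn X0 g n" and ?t = "\<lambda>x. if x \<in> V then s x else zero (gn g x)"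
  have s_cont: "continuous_map (subtopology ?X (gn_preim X0 g n U)) E s"
    and s_p: "\<And>x. x \<in> gn_preim X0 g n U \<Longrightarrow> p (s x) = gn g x"
    and s_alt: "\<And>\<sigma> x. \<sigma> permutes {0..n} \<Longrightarrow> x \<in> gn_preim X0 g n U \<Longrightarrow>
      s (x \<circ> \<sigma>) = (if evenperm \<sigma> then s x else neg (s x))"
    using s unfolding sec_Fna_def sec_Fn_def by blast+
  have zero: "continuous_map T E zero" "\<And>t. t \<in> topspace T \<Longrightarrow> p (zero t) = t"
    using sheaf unfolding ab_sheaf_space_def by blast+
  have gn_T: "gn g x \<in> topspace T" if "x \<in> topspace ?X" for x
    using that continuous_map_image_subset_topspace[OF continuous_map_gn[OF g]] by blast
  have "continuous_map ?X E ?t"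
  proof (rule continuous_map_if_clopen[OF V(1,2)])
    show "continuous_map (subtopology ?X V) E s"
      using continuous_map_from_subtopology_mono[OF s_cont] V(4) by blast
    show "continuous_map ?X E (\<lambda>x. zero (gn g x))"
      using continuous_map_compose[OF continuous_map_gn[OF g] zero(1)] by (simp add: o_def)
  qed
  moreover have "p (?t x) = gn g x" if "x \<in> topspace ?X" for x
    using s_p V(4) zero(2)[OF gn_T[OF that]] by auto
  moreover have "?X closure_of {x \<in> topspace ?X. ?t x \<noteq> zero (gn g x)} \<subseteq> Tnf X0 g n"
  proof -
    have "?X closure_of {x \<in> topspace ?X. ?t x \<noteq> zero (gn g x)} \<subseteq> V"
      using V(2) by (intro closure_of_minimal) auto
    then show ?thesis
      using V(4) by blast
  qed
  moreover have "?t (x \<circ> \<sigma>) = (if evenperm \<sigma> then ?t x else neg (?t x))"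
    if \<sigma>: "\<sigma> permutes {0..n}" and x: "x \<in> topspace ?X" for \<sigma> x
  proof (cases "x \<in> V")
    case True
    then show ?thesis
      using permutation_invariant_iff[OF V(3) \<sigma>] s_alt[OF \<sigma>] V(4) by auto
  next
    case False
    then show ?thesis
      using permutation_invariant_iff[OF V(3) \<sigma>] Tn_compose_permutes(2)[OF \<sigma> x]
        ab_sheaf_space_neg_zero[OF sheaf gn_T[OF x]] by auto
  qed
  ultimately show ?thesis
    unfolding sec_Fna_def sec_Fn_def gn_preim_topspace[OF g] subtopology_topspace by blast
qed

definition sec_support ::
  "'x topology \<Rightarrow> ('x \<Rightarrow> 't) \<Rightarrow> nat \<Rightarrow> ('t \<Rightarrow> 'e) \<Rightarrow> 't set \<Rightarrow> ((nat \<Rightarrow> 'x) \<Rightarrow> 'e) \<Rightarrow> (nat \<Rightarrow> 'x) set"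
where
  "sec_support X0 g n zero U s = subtopology (Tn X0 g n) (gn_preim X0 g n U) closure_of
     {x \<in> gn_preim X0 g n U. s x \<noteq> zero (gn g x)}"

lemma sec_support_eq:
  "sec_support X0 g n zero U s =
     gn_preim X0 g n U \<inter> Tn X0 g n closure_of {x \<in> gn_preim X0 g n U. s x \<noteq> zero (gn g x)}"
  unfolding sec_support_def closure_of_subtopology by (simp add: Int_absorb1)

lemma sec_support_subset_Tnf:
  "s \<in> sec_Fna X0 g n E p zero neg U \<Longrightarrow> sec_support X0 g n zero U s \<subseteq> Tnf X0 g n"
  unfolding sec_Fna_def sec_support_def by blast

lemma sec_eq_zero_outside_support:
  assumes "x \<in> gn_preim X0 g n U" and "x \<notin> sec_support X0 g n zero U s"
  shows "s x = zero (gn g x)"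
proof -
  have "{x \<in> gn_preim X0 g n U. s x \<noteq> zero (gn g x)} \<subseteq> sec_support X0 g n zero U s"
    unfolding sec_support_def gn_preim_def by (intro closure_of_subset) auto
  then show ?thesis
    using assms by blast
qed

lemma compactin_sec_support_Int:
  assumes "Hausdorff_space T" and "continuous_map X0 T g" and "proper_map X0 T g"
    and "compactin T L" and "L \<subseteq> U"
  shows "compactin (Tn X0 g n) (sec_support X0 g n zero U s \<inter> gn_preim X0 g n L)"
proof -
  have "gn_preim X0 g n L \<subseteq> gn_preim X0 g n U"
    using assms(5) unfolding gn_preim_def by blast
  then have "sec_support X0 g n zero U s \<inter> gn_preim X0 g n L =
      Tn X0 g n closure_of {x \<in> gn_preim X0 g n U. s x \<noteq> zero (gn g x)} \<inter> gn_preim X0 g n L"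
    unfolding sec_support_eq by blast
  then show ?thesis
    using compactin_gn_preim[OF assms(1-4)] by (simp add: closed_Int_compactin)
qed

lemma permutation_invariant_clopen_between:
  assumes X0: "Hausdorff_space X0" "locally_compact_space X0" "totally_disconnected_space X0"
    and T: "Hausdorff_space T" and g: "continuous_map X0 T g" and U: "openin T U"
    and C: "compactin (Tn X0 g n) C" "C \<subseteq> Tnf X0 g n \<inter> gn_preim X0 g n U"
  obtains V where "openin (Tn X0 g n) V" "closedin (Tn X0 g n) V" "permutation_invariant n V"
    "C \<subseteq> V" "V \<subseteq> Tnf X0 g n \<inter> gn_preim X0 g n U"
proof -
  have O: "openin (Tn X0 g n) (Tnf X0 g n \<inter> gn_preim X0 g n U)"
    using openin_Tnf[OF X0(1)] openin_continuous_map_preimage[OF continuous_map_gn[OF g] U]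
    unfolding gn_preim_def by (rule openin_Int)
  obtain V0 where V0: "openin (Tn X0 g n) V0" "closedin (Tn X0 g n) V0" "C \<subseteq> V0"
      "V0 \<subseteq> Tnf X0 g n \<inter> gn_preim X0 g n U"
    by (rule clopen_between_compact_and_open[OF locally_compact_space_Tn[OF X0(2) T g]
        Hausdorff_space_Tn[OF X0(1)] totally_disconnected_space_Tn[OF X0(3)] C(1) O C(2)])
  obtain V where V: "openin (Tn X0 g n) V" "closedin (Tn X0 g n) V" "permutation_invariant n V"
      "V0 \<subseteq> V" "V \<subseteq> Tnf X0 g n \<inter> gn_preim X0 g n U"
    by (rule permutation_invariant_clopen_superset[OF V0(1,2,4)])
  have "C \<subseteq> V"
    using V0(3) V(4) by (rule subset_trans)
  then show ?thesis
    by (rule that[OF V(1,2,3) _ V(5)])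
qed

lemma c_soft_sec_Fna:
  assumes T: "Hausdorff_space T" "locally_compact_space T"
    and X0: "Hausdorff_space X0" "locally_compact_space X0" "totally_disconnected_space X0"
    and g: "continuous_map X0 T g" "proper_map X0 T g"
    and sheaf: "ab_sheaf_space T E p add zero neg"
  shows "c_soft T (sec_Fna X0 g n E p zero neg) (gn_preim X0 g n)"
  unfolding c_soft_def
proof (intro allI impI, elim conjE)
  fix K U s
  assume K: "compactin T K" and U: "openin T U" and "K \<subseteq> U"
    and s: "s \<in> sec_Fna X0 g n E p zero neg U"
  obtain W L where W: "openin T W" "K \<subseteq> W" and L: "compactin T L" "W \<subseteq> L" "L \<subseteq> U"
    using compact_neighbourhood_within_open[OF T K U \<open>K \<subseteq> U\<close>] by metis
  let ?C = "sec_support X0 g n zero U s \<inter> gn_preim X0 g n L"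
  have "?C \<subseteq> Tnf X0 g n \<inter> gn_preim X0 g n U"
    using sec_support_subset_Tnf[OF s] sec_support_eq[of X0 g n zero U s] by blast
  then obtain V where V: "openin (Tn X0 g n) V" "closedin (Tn X0 g n) V" "permutation_invariant n V"
      "?C \<subseteq> V" "V \<subseteq> Tnf X0 g n \<inter> gn_preim X0 g n U"
    using permutation_invariant_clopen_between[OF X0 T(1) g(1) U
        compactin_sec_support_Int[OF T(1) g L(1,3)]] by blast
  let ?t = "\<lambda>x. if x \<in> V then s x else zero (gn g x)"
  have "?t \<in> sec_Fna X0 g n E p zero neg (topspace T)"
    using sec_Fna_extend_by_zero[OF sheaf g(1) V(1,2,3,5) s] .
  moreover have "?t x = s x" if "x \<in> gn_preim X0 g n W" for x
  proof -
    have L_x: "x \<in> gn_preim X0 g n L" and U_x: "x \<in> gn_preim X0 g n U"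
      using that L(2,3) unfolding gn_preim_def by auto
    show ?thesis
    proof (cases "x \<in> V")
      case False
      then have "x \<notin> sec_support X0 g n zero U s"
        using V(4) L_x by blast
      then show ?thesis
        using False sec_eq_zero_outside_support[OF U_x] by metis
    qed simp
  qed
  ultimately show "\<exists>t\<in>sec_Fna X0 g n E p zero neg (topspace T).
      \<exists>W. openin T W \<and> K \<subseteq> W \<and> W \<subseteq> U \<and> (\<forall>x\<in>gn_preim X0 g n W. t x = s x)"
    using W L by (intro bexI[of _ ?t] exI[of _ W]) auto
qed

theorem proposition2p10:
  fixes G :: "'g topology" and T :: "'t topology" and X0 :: "'x topology" and E :: "'e topology"
    and s r :: "'g \<Rightarrow> 't" and m :: "'g \<Rightarrow> 'g \<Rightarrow> 'g" and i :: "'g \<Rightarrow> 'g" and u :: "'t \<Rightarrow> 'g"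
    and g :: "'x \<Rightarrow> 't" and act0 :: "'g \<Rightarrow> 'x \<Rightarrow> 'x"
    and p :: "'e \<Rightarrow> 't" and add :: "'e \<Rightarrow> 'e \<Rightarrow> 'e" and zero :: "'t \<Rightarrow> 'e" and neg :: "'e \<Rightarrow> 'e"
    and actE :: "'g \<Rightarrow> 'e \<Rightarrow> 'e"
    and N n :: nat
  assumes "etale_groupoid G T s r m i u"
    and "sclch G" and "sclch T" and "sclch X0"
    and "G_space G T s r m u X0 g act0"
    and "totally_disconnected_space X0"
    and "proper_map X0 T g"
    and "\<forall>t\<in>topspace T. finite {x \<in> topspace X0. g x = t} \<and> card {x \<in> topspace X0. g x = t} \<le> N"
    and "G_sheaf G T s r m u E p add zero neg actE"
  shows "c_soft T (sec_Fna X0 g n E p zero neg) (gn_preim X0 g n)"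
proof -
  have T: "Hausdorff_space T" "locally_compact_space T"
    using assms(3) unfolding sclch_def by blast+
  have X0: "Hausdorff_space X0" "locally_compact_space X0"
    using assms(4) unfolding sclch_def by blast+
  have g: "continuous_map X0 T g"
    using assms(5) unfolding G_space_def by blast
  have sheaf: "ab_sheaf_space T E p add zero neg"
    using assms(9) unfolding G_sheaf_def by blast
  show ?thesis
    by (rule c_soft_sec_Fna[OF T X0 assms(6) g assms(7) sheaf])
qed

end
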